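(* Let $G$ be a graph on $d$ vertices (without loops) with adjacency matrix $A_G$, and assume $G$ is hyperenergetic, i.e. $E(G)\ge 2(d-1)$. For $1\le i\le d$ let $G_i$ be an $r$-regular simple undirected graph with $k$ vertices. Then \[ E(G[G_1,\ldots,G_d])\ge E(G)+\sum_{i=1}^d E(G_i). \]
   Context: The energy $E(H)$ of a graph $H$ is the sum of the absolute values of the eigenvalues (with multiplicity) of its adjacency matrix. For a graph $G$ on vertices $v_1,\ldots,v_d$ and graphs $G_1,\ldots,G_d$, the joined union $G[G_1,\ldots,G_d]$ is obtained from the disjoint union of $G_1,\ldots,G_d$ by joining each vertex of $G_i$ with each vertex of $G_j$ by an edge whenever $v_i$ and $v_j$ are adjacent in $G$; its adjacency matrix has diagonal blocks the adjacency matrices of the $G_i$ and $(i,j)$ off-diagonal block equal to the all-$a_{ij}$ matrix, where $A_G=(a_{ij})$. *)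

theory Defs
  imports "Jordan_Normal_Form.Char_Poly"
begin

definition simple_graph :: "nat \<Rightarrow> (nat \<Rightarrow> nat \<Rightarrow> bool) \<Rightarrow> bool" where
  "simple_graph n E \<longleftrightarrow> (\<forall>i<n. \<forall>j<n. E i j \<longleftrightarrow> E j i) \<and> (\<forall>i<n. \<not> E i i)"

definition regular_graph :: "nat \<Rightarrow> nat \<Rightarrow> (nat \<Rightarrow> nat \<Rightarrow> bool) \<Rightarrow> bool" where
  "regular_graph n r E \<longleftrightarrow> simple_graph n E \<and> (\<forall>i<n. card {j. j < n \<and> E i j} = r)"

definition adj_mat :: "nat \<Rightarrow> (nat \<Rightarrow> nat \<Rightarrow> bool) \<Rightarrow> real mat" where
  "adj_mat n E = mat n n (\<lambda>(i,j). if E i j then 1 else 0)"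

(* Energy of a (real, square) matrix: sum of absolute values of its eigenvalues,
   counted with multiplicity, i.e. of the complex roots of its characteristic polynomial. *)
definition mat_energy :: "real mat \<Rightarrow> real" where
  "mat_energy A = sum_mset (image_mset cmod (proots (char_poly (map_mat complex_of_real A))))"

definition graph_energy :: "nat \<Rightarrow> (nat \<Rightarrow> nat \<Rightarrow> bool) \<Rightarrow> real" where
  "graph_energy n E = mat_energy (adj_mat n E)"

(* Joined union G[G_1,...,G_d], each G_i on k vertices; vertex (i,a) (i<d, a<k) is
   numbered i*k+a. Diagonal blocks: A(G_i); (i,j) off-diagonal block: constant a_ij. *)
definition joined_union_mat ::
  "nat \<Rightarrow> (nat \<Rightarrow> nat \<Rightarrow> bool) \<Rightarrow> nat \<Rightarrow> (nat \<Rightarrow> nat \<Rightarrow> nat \<Rightarrow> bool) \<Rightarrow> real mat" where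
  "joined_union_mat d E k Gs = mat (d*k) (d*k) (\<lambda>(p,q).
     if p div k = q div k then adj_mat k (Gs (p div k)) $$ (p mod k, q mod k)
     else adj_mat d E $$ (p div k, q div k))"

end

theory Submission
  imports Defs "Jordan_Normal_Form.Schur_Decomposition" "Jordan_Normal_Form.Jordan_Normal_Form_Uniqueness"
begin

(* Since every G_i is r-regular, the partition of the vertices of G[G_1,...,G_d] into the d blocks
   is equitable: the block indicator vectors span an invariant subspace on which the adjacency
   matrix acts as the quotient matrix r I + k A_G, while on the quotient space it acts
   block-diagonally, the i-th block having the spectrum of G_i with one eigenvalue r removed.  Hence
     E(G[G_1,...,G_d]) = sum_lambda |k lambda + r| + sum_i (E(G_i) - r),
   lambda running over the spectrum of G.  The eigenvalues of G sum to 0, so at most d - 1 of them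
   are negative, and |k lambda + r| >= k |lambda| + r - 2 r [lambda < 0] gives
     sum_lambda |k lambda + r| >= k E(G) + d r - 2 r (d - 1) >= E(G) + d r,
   the last step because r <= k - 1 and E(G) >= 2 (d - 1). *)

definition proots_cmod_sum :: "complex poly \<Rightarrow> real" where
  "proots_cmod_sum p = sum_mset (image_mset cmod (proots p))"

lemma mat_energy_eq_proots_cmod_sum:
  "mat_energy A = proots_cmod_sum (char_poly (map_mat complex_of_real A))"
  by (simp add: mat_energy_def proots_cmod_sum_def)

lemma proots_cmod_sum_mult:
  "p \<noteq> 0 \<Longrightarrow> q \<noteq> 0 \<Longrightarrow> proots_cmod_sum (p * q) = proots_cmod_sum p + proots_cmod_sum q"
  by (simp add: proots_cmod_sum_def proots_mult)

lemma proots_cmod_sum_prod: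
  assumes "\<And>i. i \<in> I \<Longrightarrow> f i \<noteq> 0"
  shows "proots_cmod_sum (\<Prod>i\<in>I. f i) = (\<Sum>i\<in>I. proots_cmod_sum (f i))"
  using assms
proof (induction I rule: infinite_finite_induct)
  case (insert i I)
  then show ?case
    by (simp add: proots_cmod_sum_mult prod_zero_iff)
qed (simp_all add: proots_cmod_sum_def)

lemma proots_prod_linear_factors: "proots (\<Prod>a\<leftarrow>as. [:- a, 1:]) = mset (as :: 'a :: idom list)"
proof (induction as)
  case (Cons a as)
  have "(\<Prod>a\<leftarrow>as. [:- a, 1:]) \<noteq> 0"
    by (auto simp: prod_list_zero_iff)
  with Cons show ?case
    by (simp add: proots_mult del: mult_pCons_left)
qed simp

lemma proots_cmod_sum_prod_linear_factors:
  "proots_cmod_sum (\<Prod>a\<leftarrow>as. [:- f a, 1:]) = (\<Sum>a\<leftarrow>as. cmod (f a))"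
  using proots_prod_linear_factors[of "map f as"]
  by (simp add: proots_cmod_sum_def sum_mset_sum_list comp_def flip: mset_map)

lemma char_poly_nonzero: "A \<in> carrier_mat n n \<Longrightarrow> char_poly (A :: 'a :: field mat) \<noteq> 0"
  using degree_monic_char_poly[of A n] by auto

lemma char_poly_dim_0: "A \<in> carrier_mat 0 0 \<Longrightarrow> char_poly (A :: 'a :: field mat) = 1"
  using degree_monic_char_poly[of A 0] by (metis monic_degree_0)

lemma char_poly_four_block_mat_zero:
  fixes B :: "complex mat"
  assumes "B \<in> carrier_mat n n" "C \<in> carrier_mat n m" "D \<in> carrier_mat m m"
  shows "char_poly (four_block_mat B C (0\<^sub>m m n) D) = char_poly B * char_poly D"
  using assms char_poly_factorized by (intro char_poly_0_block[OF refl]) blast+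

lemma char_poly_mat_1: "char_poly (mat 1 1 f :: complex mat) = [:- f (0, 0), 1:]"
proof -
  have "char_poly (mat 1 1 f :: complex mat) = (\<Prod>a\<leftarrow>diag_mat (mat 1 1 f). [:- a, 1:])"
    by (rule char_poly_upper_triangular[of _ 1]) (auto simp: upper_triangular_def)
  then show ?thesis
    by (simp add: diag_mat_def)
qed

lemma sum_diag_mult_comm:
  fixes A B :: "'a :: comm_ring_1 mat"
  assumes "A \<in> carrier_mat n m" "B \<in> carrier_mat m n"
  shows "(\<Sum>i<n. (A * B) $$ (i, i)) = (\<Sum>j<m. (B * A) $$ (j, j))"
proof -
  have "(\<Sum>i<n. (A * B) $$ (i, i)) = (\<Sum>i<n. \<Sum>j<m. A $$ (i, j) * B $$ (j, i))"
    using assms by (simp add: scalar_prod_def atLeast0LessThan)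
  also have "\<dots> = (\<Sum>j<m. \<Sum>i<n. B $$ (j, i) * A $$ (i, j))"
    by (subst sum.swap) (simp add: mult.commute)
  also have "\<dots> = (\<Sum>j<m. (B * A) $$ (j, j))"
    using assms by (simp add: scalar_prod_def atLeast0LessThan)
  finally show ?thesis .
qed

lemma sum_eigenvalues_eq_trace:
  fixes A :: "complex mat"
  assumes A: "A \<in> carrier_mat n n" and cp: "char_poly A = (\<Prod>a\<leftarrow>es. [:- a, 1:])"
  shows "sum_list es = (\<Sum>i<n. A $$ (i, i))"
proof -
  obtain B P Q where "schur_decomposition A es = (B, P, Q)"
    by (cases "schur_decomposition A es") auto
  from schur_decomposition[OF A cp this] A
  have B: "B \<in> carrier_mat n n" and P: "P \<in> carrier_mat n n" and Q: "Q \<in> carrier_mat n n"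
    and "Q * P = 1\<^sub>m n" "A = P * B * Q" "diag_mat B = es"
    unfolding similar_mat_wit_def Let_def by auto
  have "sum_list es = (\<Sum>i<n. B $$ (i, i))"
    using B \<open>diag_mat B = es\<close> by (auto simp: diag_mat_def atLeast_upt sum_list_distinct_conv_sum_set)
  also have "\<dots> = (\<Sum>i<n. (Q * (P * B)) $$ (i, i))"
    using B \<open>Q * P = 1\<^sub>m n\<close> by (simp flip: assoc_mult_mat[OF Q P B])
  also have "\<dots> = (\<Sum>i<n. (P * B * Q) $$ (i, i))"
    using P B Q by (intro sum_diag_mult_comm) auto
  finally show ?thesis
    using \<open>A = P * B * Q\<close> by simp
qed

lemma char_poly_smult_add_scalar:
  fixes A :: "complex mat"
  assumes A: "A \<in> carrier_mat n n" and cp: "char_poly A = (\<Prod>a\<leftarrow>es. [:- a, 1:])"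
  shows "char_poly (\<kappa> \<cdot>\<^sub>m A + r \<cdot>\<^sub>m 1\<^sub>m n) = (\<Prod>a\<leftarrow>es. [:- (\<kappa> * a + r), 1:])"
proof -
  obtain B P Q where "schur_decomposition A es = (B, P, Q)"
    by (cases "schur_decomposition A es") auto
  from schur_decomposition[OF A cp this]
  have sim: "similar_mat_wit A B P Q" and "upper_triangular B" "diag_mat B = es"
    by auto
  from similar_mat_witD2[OF A sim] have B: "B \<in> carrier_mat n n"
    by auto
  have "\<kappa> \<cdot>\<^sub>m A + r \<cdot>\<^sub>m 1\<^sub>m n = char_matrix (\<kappa> \<cdot>\<^sub>m A) (- r)"
    using A by (simp add: char_matrix_def)
  moreover have "similar_mat_wit (char_matrix (\<kappa> \<cdot>\<^sub>m A) (- r)) (char_matrix (\<kappa> \<cdot>\<^sub>m B) (- r)) P Q"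
    by (intro similar_mat_wit_char_matrix similar_mat_wit_smult sim)
  ultimately have "char_poly (\<kappa> \<cdot>\<^sub>m A + r \<cdot>\<^sub>m 1\<^sub>m n) = char_poly (char_matrix (\<kappa> \<cdot>\<^sub>m B) (- r))"
    by (metis char_poly_similar similar_mat_def)
  also have "\<dots> = (\<Prod>a\<leftarrow>diag_mat (char_matrix (\<kappa> \<cdot>\<^sub>m B) (- r)). [:- a, 1:])"
    using B \<open>upper_triangular B\<close>
    by (intro char_poly_upper_triangular[of _ n]) (auto simp: char_matrix_def upper_triangular_def)
  also have "diag_mat (char_matrix (\<kappa> \<cdot>\<^sub>m B) (- r)) = map (\<lambda>a. \<kappa> * a + r) es"
    using B \<open>diag_mat B = es\<close> by (auto simp: diag_mat_def char_matrix_def)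
  finally show ?thesis
    by (simp add: comp_def)
qed

definition block_diag_mat :: "nat \<Rightarrow> nat \<Rightarrow> (nat \<Rightarrow> nat \<Rightarrow> nat \<Rightarrow> 'a :: zero) \<Rightarrow> 'a mat" where
  "block_diag_mat d m F = mat (d * m) (d * m) (\<lambda>(p, q).
     if p div m = q div m then F (p div m) (p mod m) (q mod m) else 0)"

lemma block_diag_mat_dim [simp]:
  "dim_row (block_diag_mat d m F) = d * m" "dim_col (block_diag_mat d m F) = d * m"
  by (simp_all add: block_diag_mat_def)

lemma block_diag_mat_carrier [simp]: "block_diag_mat d m F \<in> carrier_mat (d * m) (d * m)"
  by (simp add: carrier_matI)

lemma block_diag_mat_Suc:
  "block_diag_mat (Suc d) m F = four_block_mat (mat m m (\<lambda>(a, b). F 0 a b)) (0\<^sub>m m (d * m))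
     (0\<^sub>m (d * m) m) (block_diag_mat d m (\<lambda>i. F (Suc i)))" (is "_ = ?R")
proof (rule eq_matI)
  fix p q assume "p < dim_row ?R" "q < dim_col ?R"
  then have pq: "p < m + d * m" "q < m + d * m"
    by auto
  then have "0 < m"
    by (cases m) auto
  with pq show "block_diag_mat (Suc d) m F $$ (p, q) = ?R $$ (p, q)"
    by (auto simp: block_diag_mat_def le_div_geq le_mod_geq not_less)
qed (auto simp: block_diag_mat_def)

lemma char_poly_block_diag_mat:
  "char_poly (block_diag_mat d m F :: complex mat) = (\<Prod>i<d. char_poly (mat m m (\<lambda>(a, b). F i a b)))"
proof (induction d arbitrary: F)
  case 0
  show ?case
    using char_poly_dim_0[OF block_diag_mat_carrier[of 0 m F, simplified]] by simp
next
  case (Suc d)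
  have "char_poly (block_diag_mat (Suc d) m F)
      = char_poly (mat m m (\<lambda>(a, b). F 0 a b)) * char_poly (block_diag_mat d m (\<lambda>i. F (Suc i)))"
    unfolding block_diag_mat_Suc by (rule char_poly_four_block_mat_zero) auto
  then show ?case
    using Suc.IH by (simp add: prod.lessThan_Suc_shift del: prod.lessThan_Suc)
qed

lemma real_symmetric_mat_eigenvalue_real:
  fixes A :: "real mat"
  assumes A: "A \<in> carrier_mat n n" and sym: "\<And>i j. i < n \<Longrightarrow> j < n \<Longrightarrow> A $$ (i, j) = A $$ (j, i)"
    and root: "poly (char_poly (map_mat complex_of_real A)) e = 0"
  shows "Im e = 0"
proof -
  let ?A = "map_mat complex_of_real A"
  have "eigenvalue ?A e"
    using eigenvalue_root_char_poly[of ?A n] A root by simp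
  then obtain v where v: "v \<in> carrier_vec n" "v \<noteq> 0\<^sub>v n" "?A *\<^sub>v v = e \<cdot>\<^sub>v v"
    unfolding eigenvalue_def eigenvector_def using A by auto
  have Av: "(\<Sum>j<n. ?A $$ (i, j) * v $ j) = e * v $ i" if "i < n" for i
  proof -
    have "(?A *\<^sub>v v) $ i = (\<Sum>j<n. ?A $$ (i, j) * v $ j)"
      using A v(1) that by (simp add: scalar_prod_def atLeast0LessThan)
    then show ?thesis
      using v that by simp
  qed
  \<comment> \<open>The Rayleigh quotient: the form \<open>v\<^sup>* A v\<close> is real and equals \<open>e |v|\<^sup>2\<close>.\<close>
  define s where "s = (\<Sum>i<n. \<Sum>j<n. cnj (v $ i) * ?A $$ (i, j) * v $ j)"
  have "cnj s = (\<Sum>i<n. \<Sum>j<n. v $ i * ?A $$ (j, i) * cnj (v $ j))"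
    using A sym unfolding s_def by (simp add: mult.commute)
  also have "\<dots> = s"
    unfolding s_def by (subst sum.swap) (simp add: mult.commute mult.left_commute)
  finally have "Im s = 0"
    by (simp add: complex_eq_iff)
  have "s = (\<Sum>i<n. cnj (v $ i) * (\<Sum>j<n. ?A $$ (i, j) * v $ j))"
    unfolding s_def by (simp add: sum_distrib_left mult.assoc)
  also have "\<dots> = (\<Sum>i<n. cnj (v $ i) * (e * v $ i))"
    by (simp add: Av)
  also have "\<dots> = e * (\<Sum>i<n. complex_of_real ((cmod (v $ i))\<^sup>2))"
    by (simp add: sum_distrib_left complex_norm_square mult_ac del: of_real_power)
  moreover obtain i where "i < n" "v $ i \<noteq> 0"
    using v(1,2) by (metis carrier_vecD eq_vecI index_zero_vec)
  then have "(\<Sum>i<n. (cmod (v $ i))\<^sup>2) > 0"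
    by (intro sum_pos2[of _ i]) auto
  ultimately show ?thesis
    using \<open>Im s = 0\<close> by (simp flip: of_real_sum)
qed

definition block_partition_mat ::
  "nat \<Rightarrow> nat \<Rightarrow> (nat \<Rightarrow> nat \<Rightarrow> nat \<Rightarrow> 'a) \<Rightarrow> (nat \<Rightarrow> nat \<Rightarrow> 'a) \<Rightarrow> 'a mat" where
  "block_partition_mat d k D c = mat (d * k) (d * k) (\<lambda>(p, q).
     if p div k = q div k then D (p div k) (p mod k) (q mod k) else c (p div k) (q div k))"

lemma block_index:
  assumes "i < d" "a < (k :: nat)"
  shows "i * k + a < d * k" "(i * k + a) div k = i" "(i * k + a) mod k = a"
proof -
  have "(i + 1) * k \<le> d * k"
    using assms by (intro mult_right_mono) auto
  then show "i * k + a < d * k"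
    using assms by simp
qed (use assms in simp_all)

lemma block_partition_mat_index:
  assumes "i < d" "a < k" "j < d" "b < k"
  shows "block_partition_mat d k D c $$ (i * k + a, j * k + b) = (if i = j then D i a b else c i j)"
  using assms by (simp add: block_partition_mat_def block_index)

lemma sum_block_column:
  fixes k :: nat and f :: "nat \<Rightarrow> 'a :: semiring_1"
  assumes "j < d"
  shows "(\<Sum>q\<in>{..<d * k} \<inter> {q. q div k = j}. f q) = (\<Sum>b<k. f (j * k + b))"
proof -
  have "{..<d * k} \<inter> {q. q div k = j} = (\<lambda>b. j * k + b) ` {..<k}"
  proof (intro equalityI subsetI)
    fix q assume q: "q \<in> {..<d * k} \<inter> {q. q div k = j}"
    then have "0 < k"
      by (cases k) auto
    with q show "q \<in> (\<lambda>b. j * k + b) ` {..<k}"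
      by (intro image_eqI[of _ _ "q mod k"]) auto
  qed (use assms in \<open>auto simp: block_index\<close>)
  then show ?thesis
    by (simp add: sum.reindex inj_on_def)
qed

(* Enumerates the d * (k - 1) vertices that are not the first vertex of their block:
   the u-th one is vertex u mod (k - 1) + 1 of block u div (k - 1). *)
definition nonfirst_idx :: "nat \<Rightarrow> nat \<Rightarrow> nat" where
  "nonfirst_idx k u = u div (k - 1) * k + (u mod (k - 1) + 1)"

lemma nonfirst_idx:
  assumes "u < d * (k - 1)"
  shows "u div (k - 1) < d" "u mod (k - 1) + 1 < k" "nonfirst_idx k u < d * k"
    "nonfirst_idx k u div k = u div (k - 1)" "nonfirst_idx k u mod k = u mod (k - 1) + 1"
    "u div (k - 1) * k < d * k"
proof -
  have "0 < k - 1"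
    using assms by (cases "k - 1") auto
  then have "u mod (k - 1) < k - 1"
    by simp
  with assms have bounds: "u div (k - 1) < d" "u mod (k - 1) + 1 < k"
    by (auto simp: less_mult_imp_div_less)
  then show "u div (k - 1) < d" "u mod (k - 1) + 1 < k" "u div (k - 1) * k < d * k"
    by simp_all
  from bounds show "nonfirst_idx k u < d * k" "nonfirst_idx k u div k = u div (k - 1)"
    "nonfirst_idx k u mod k = u mod (k - 1) + 1"
    using block_index[of "u div (k - 1)" d "u mod (k - 1) + 1" k]
    unfolding nonfirst_idx_def by simp_all
qed

lemma nonfirst_range:
  assumes "(k :: nat) \<ge> 1" "\<not> t < d" "t < d * k"
  shows "t - d < d * (k - 1)"
proof -
  have "d * k = d + d * (k - 1)"
    using assms(1) by (simp add: algebra_simps)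
  with assms show ?thesis
    by linarith
qed

(* partition_basis_mat has as columns the d block indicator vectors followed by the unit vectors
   of the non-first vertices; partition_coord_mat is its inverse, expressing a vector by its entry
   at the first vertex of each block and the differences to it at the other vertices. *)
definition partition_coord_mat :: "nat \<Rightarrow> nat \<Rightarrow> 'a :: comm_ring_1 mat" where
  "partition_coord_mat d k = mat (d * k) (d * k) (\<lambda>(t, p).
     if t < d then of_bool (p = t * k)
     else of_bool (p = nonfirst_idx k (t - d)) - of_bool (p = (t - d) div (k - 1) * k))"

definition partition_basis_mat :: "nat \<Rightarrow> nat \<Rightarrow> 'a :: comm_ring_1 mat" where
  "partition_basis_mat d k = mat (d * k) (d * k) (\<lambda>(p, s).
     if s < d then of_bool (p div k = s) else of_bool (p = nonfirst_idx k (s - d)))"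

lemma partition_coord_mat_mult_index:
  assumes "k \<ge> 1" "A \<in> carrier_mat (d * k) n" "t < d * k" "s < n"
  shows "(partition_coord_mat d k * A) $$ (t, s) = (if t < d then A $$ (t * k, s)
     else A $$ (nonfirst_idx k (t - d), s) - A $$ ((t - d) div (k - 1) * k, s))"
proof (cases "t < d")
  case True
  with assms have "t * k < d * k"
    by simp
  with True assms show ?thesis
    by (simp add: partition_coord_mat_def scalar_prod_def)
next
  case False
  with assms have u: "t - d < d * (k - 1)"
    by (intro nonfirst_range)
  with False assms nonfirst_idx[OF u] show ?thesis
    by (simp add: partition_coord_mat_def scalar_prod_def left_diff_distrib sum_subtractf)
qed

lemma mult_partition_basis_mat_index:
  assumes "k \<ge> 1" "A \<in> carrier_mat n (d * k)" "p < n" "s < d * k"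
  shows "(A * partition_basis_mat d k) $$ (p, s) = (if s < d then (\<Sum>b<k. A $$ (p, s * k + b))
     else A $$ (p, nonfirst_idx k (s - d)))"
proof (cases "s < d")
  case True
  then show ?thesis
    using assms by (simp add: partition_basis_mat_def scalar_prod_def atLeast0LessThan sum_block_column)
next
  case False
  with assms have "nonfirst_idx k (s - d) < d * k"
    by (intro nonfirst_idx nonfirst_range)
  with False assms show ?thesis
    by (simp add: partition_basis_mat_def scalar_prod_def)
qed

lemma nonfirst_idx_inj:
  assumes "u < d * (k - 1)" "v < d * (k - 1)"
  shows "nonfirst_idx k u = nonfirst_idx k v \<longleftrightarrow> u = v"
  using nonfirst_idx(4,5)[OF assms(1)] nonfirst_idx(4,5)[OF assms(2)]
  by (metis add_right_cancel div_mult_mod_eq)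

lemma block_start_neq_nonfirst_idx:
  assumes "u < d * (k - 1)"
  shows "i * k \<noteq> nonfirst_idx k u"
proof
  assume "i * k = nonfirst_idx k u"
  then have "nonfirst_idx k u mod k = 0"
    by (metis mod_mult_self2_is_0)
  then show False
    using nonfirst_idx(5)[OF assms] by simp
qed

lemma partition_coord_basis_mat_inverse:
  assumes "k \<ge> 1"
  shows "partition_coord_mat d k * partition_basis_mat d k = (1\<^sub>m (d * k) :: 'a :: comm_ring_1 mat)"
proof (rule eq_matI)
  fix t s assume "t < dim_row (1\<^sub>m (d * k) :: 'a mat)" "s < dim_col (1\<^sub>m (d * k) :: 'a mat)"
  then have t: "t < d * k" and s: "s < d * k"
    by auto
  let ?S = "partition_basis_mat d k :: 'a mat"
  have "(partition_coord_mat d k * ?S) $$ (t, s) = (if t < d then ?S $$ (t * k, s)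
      else ?S $$ (nonfirst_idx k (t - d), s) - ?S $$ ((t - d) div (k - 1) * k, s))"
    using assms t s by (intro partition_coord_mat_mult_index) (auto simp: partition_basis_mat_def)
  also have "\<dots> = of_bool (t = s)"
  proof (cases "t < d")
    case True
    with assms have "t * k < d * k"
      by simp
    with True s assms show ?thesis
      using block_start_neq_nonfirst_idx[OF nonfirst_range[OF assms _ s], of t]
      by (auto simp: partition_basis_mat_def)
  next
    case False
    with assms t have u: "t - d < d * (k - 1)"
      by (intro nonfirst_range)
    show ?thesis
    proof (cases "s < d")
      case True
      with False s assms show ?thesis
        using nonfirst_idx[OF u] by (simp add: partition_basis_mat_def)
    next
      case s_ge: False
      with assms s have v: "s - d < d * (k - 1)"
        by (intro nonfirst_range)
      have "t = s \<longleftrightarrow> t - d = s - d"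
        using False s_ge by linarith
      with False s_ge s assms show ?thesis
        using nonfirst_idx(3,6)[OF u] block_start_neq_nonfirst_idx[OF v] nonfirst_idx_inj[OF u v]
        by (simp add: partition_basis_mat_def)
    qed
  qed
  finally show "(partition_coord_mat d k * ?S) $$ (t, s) = 1\<^sub>m (d * k) $$ (t, s)"
    using t s by simp
qed (auto simp: partition_coord_mat_def partition_basis_mat_def)

lemma sum_block_partition_mat_row:
  assumes rows: "\<And>i a. i < d \<Longrightarrow> a < k \<Longrightarrow> (\<Sum>b<k. D i a b) = r" and "p < d * k" "j < d"
  shows "(\<Sum>b<k. block_partition_mat d k D c $$ (p, j * k + b))
    = (if p div k = j then r else of_nat k * c (p div k) j)"
proof -
  have "0 < k"
    using assms(2) by (cases k) auto
  then have "block_partition_mat d k D c $$ (p, j * k + b)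
      = (if p div k = j then D j (p mod k) b else c (p div k) j)" if "b < k" for b
    using assms that by (simp add: block_partition_mat_def block_index)
  with \<open>0 < k\<close> show ?thesis
    using rows[of j "p mod k"] assms(3) by simp
qed

lemma block_partition_mat_nonfirst_diff:
  fixes D :: "nat \<Rightarrow> nat \<Rightarrow> nat \<Rightarrow> 'a :: ab_group_add"
  assumes u: "u < d * (k - 1)" and v: "v < d * (k - 1)"
  shows "block_partition_mat d k D c $$ (nonfirst_idx k u, nonfirst_idx k v)
      - block_partition_mat d k D c $$ (u div (k - 1) * k, nonfirst_idx k v)
    = block_diag_mat d (k - 1) (\<lambda>i a b. D i (a + 1) (b + 1) - D i 0 (b + 1)) $$ (u, v)"
proof -
  define i j where "i = u div (k - 1)" and "j = v div (k - 1)"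
  define a b where "a = u mod (k - 1) + 1" and "b = v mod (k - 1) + 1"
  have ij: "i < d" "a < k" "j < d" "b < k"
    unfolding i_def j_def a_def b_def using nonfirst_idx(1,2)[OF u] nonfirst_idx(1,2)[OF v] by auto
  have "block_partition_mat d k D c $$ (nonfirst_idx k u, nonfirst_idx k v)
      = (if i = j then D i a b else c i j)"
    using block_partition_mat_index[OF ij, of D c] unfolding nonfirst_idx_def i_def j_def a_def b_def .
  moreover have "block_partition_mat d k D c $$ (u div (k - 1) * k, nonfirst_idx k v)
      = (if i = j then D i 0 b else c i j)"
    using block_partition_mat_index[OF ij(1) _ ij(3,4), of 0 D c] ij(2)
    unfolding nonfirst_idx_def i_def[symmetric] j_def[symmetric] b_def[symmetric]
    by (simp only: add_0_right zero_less_iff_neq_zero)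
  moreover have "block_diag_mat d (k - 1) (\<lambda>i a b. D i (a + 1) (b + 1) - D i 0 (b + 1)) $$ (u, v)
      = (if i = j then D i a b - D i 0 b else 0)"
    using u v by (simp add: block_diag_mat_def i_def j_def a_def b_def)
  ultimately show ?thesis
    by simp
qed

lemma partition_coord_block_partition_basis:
  fixes D :: "nat \<Rightarrow> nat \<Rightarrow> nat \<Rightarrow> 'a :: comm_ring_1" and c :: "nat \<Rightarrow> nat \<Rightarrow> 'a"
  assumes k: "k \<ge> 1" and rows: "\<And>i a. i < d \<Longrightarrow> a < k \<Longrightarrow> (\<Sum>b<k. D i a b) = r"
  defines "M \<equiv> block_partition_mat d k D c"
  shows "partition_coord_mat d k * (M * partition_basis_mat d k) = four_block_mat
     (mat d d (\<lambda>(i, j). if i = j then r else of_nat k * c i j))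
     (mat d (d * (k - 1)) (\<lambda>(i, u). M $$ (i * k, nonfirst_idx k u)))
     (0\<^sub>m (d * (k - 1)) d)
     (block_diag_mat d (k - 1) (\<lambda>i a b. D i (a + 1) (b + 1) - D i 0 (b + 1)))"
    (is "_ = ?B")
proof -
  have dk: "d + d * (k - 1) = d * k"
    using k by (simp add: algebra_simps)
  have M: "M \<in> carrier_mat (d * k) (d * k)"
    by (simp add: M_def block_partition_mat_def)
  show ?thesis
  proof (rule eq_matI)
    fix t s assume "t < dim_row ?B" "s < dim_col ?B"
    then have t: "t < d * k" and s: "s < d * k"
      using dk by auto
    have MS: "(M * partition_basis_mat d k) $$ (p, s) = (if s < d then (\<Sum>b<k. M $$ (p, s * k + b))
        else M $$ (p, nonfirst_idx k (s - d)))" if "p < d * k" for p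
      using k M that s by (intro mult_partition_basis_mat_index)
    have "(partition_coord_mat d k * (M * partition_basis_mat d k)) $$ (t, s)
      = (if t < d then (M * partition_basis_mat d k) $$ (t * k, s)
         else (M * partition_basis_mat d k) $$ (nonfirst_idx k (t - d), s)
           - (M * partition_basis_mat d k) $$ ((t - d) div (k - 1) * k, s))"
      using k M t s by (intro partition_coord_mat_mult_index) (auto simp: partition_basis_mat_def)
    also have "\<dots> = ?B $$ (t, s)"
    proof (cases "t < d")
      case True
      with k have "t * k < d * k"
        by simp
      with True t s k dk show ?thesis
        using MS sum_block_partition_mat_row[OF rows] by (simp add: M_def)
    next
      case False
      with k t have u: "t - d < d * (k - 1)"
        by (intro nonfirst_range)
      show ?thesis
      proof (cases "s < d")
        case True
        with False t s u k dk show ?thesis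
          using MS nonfirst_idx[OF u] sum_block_partition_mat_row[OF rows] by (simp add: M_def)
      next
        case s_ge: False
        with k s have v: "s - d < d * (k - 1)"
          by (intro nonfirst_range)
        with False s_ge t s u dk show ?thesis
          using MS nonfirst_idx(3,6)[OF u] block_partition_mat_nonfirst_diff[OF u v] by (simp add: M_def)
      qed
    qed
    finally show "(partition_coord_mat d k * (M * partition_basis_mat d k)) $$ (t, s) = ?B $$ (t, s)" .
  qed (use M dk in \<open>simp_all add: partition_coord_mat_def partition_basis_mat_def\<close>)
qed

(* If all row sums of the k x k matrix A equal r, then in the basis of the all-ones vector and
   e_1, ..., e_(k-1) the matrix A becomes block triangular with diagonal blocks r and deflated_mat k A. *)
definition deflated_mat :: "nat \<Rightarrow> (nat \<Rightarrow> nat \<Rightarrow> 'a :: ab_group_add) \<Rightarrow> 'a mat" where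
  "deflated_mat k A = mat (k - 1) (k - 1) (\<lambda>(a, b). A (a + 1) (b + 1) - A 0 (b + 1))"

lemma char_poly_block_partition_mat:
  fixes D :: "nat \<Rightarrow> nat \<Rightarrow> nat \<Rightarrow> complex"
  assumes k: "k \<ge> 1" and rows: "\<And>i a. i < d \<Longrightarrow> a < k \<Longrightarrow> (\<Sum>b<k. D i a b) = r"
  shows "char_poly (block_partition_mat d k D c)
    = char_poly (mat d d (\<lambda>(i, j). if i = j then r else of_nat k * c i j))
      * (\<Prod>i<d. char_poly (deflated_mat k (D i)))"
proof -
  let ?M = "block_partition_mat d k D c"
  let ?T = "partition_coord_mat d k :: complex mat" and ?S = "partition_basis_mat d k :: complex mat"
  let ?X = "mat d d (\<lambda>(i, j). if i = j then r else of_nat k * c i j)"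
  let ?Y = "mat d (d * (k - 1)) (\<lambda>(i, u). ?M $$ (i * k, nonfirst_idx k u))"
  let ?Z = "block_diag_mat d (k - 1) (\<lambda>i a b. D i (a + 1) (b + 1) - D i 0 (b + 1))"
  have carriers: "?M \<in> carrier_mat (d * k) (d * k)" "?T \<in> carrier_mat (d * k) (d * k)"
    "?S \<in> carrier_mat (d * k) (d * k)"
    by (simp_all add: block_partition_mat_def partition_coord_mat_def partition_basis_mat_def)
  have "d + d * (k - 1) = d * k"
    using k by (simp add: algebra_simps)
  then have B: "four_block_mat ?X ?Y (0\<^sub>m (d * (k - 1)) d) ?Z \<in> carrier_mat (d * k) (d * k)"
    using four_block_carrier_mat[OF mat_carrier[of d d] block_diag_mat_carrier[of d "k - 1"]] by simp
  have TS: "?T * ?S = 1\<^sub>m (d * k)"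
    using k by (rule partition_coord_basis_mat_inverse)
  then have "?S * ?T = 1\<^sub>m (d * k)"
    by (rule mat_mult_left_right_inverse[OF carriers(2,3)])
  moreover have "four_block_mat ?X ?Y (0\<^sub>m (d * (k - 1)) d) ?Z = ?T * ?M * ?S"
    by (simp only: assoc_mult_mat[OF carriers(2,1,3)] partition_coord_block_partition_basis[OF k rows])
  ultimately have "similar_mat (four_block_mat ?X ?Y (0\<^sub>m (d * (k - 1)) d) ?Z) ?M"
    using TS carriers B by (intro similar_matI) auto
  then have "char_poly ?M = char_poly (four_block_mat ?X ?Y (0\<^sub>m (d * (k - 1)) d) ?Z)"
    by (rule char_poly_similar[symmetric])
  also have "\<dots> = char_poly ?X * char_poly ?Z"
    by (rule char_poly_four_block_mat_zero) auto
  finally show ?thesis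
    unfolding char_poly_block_diag_mat deflated_mat_def by simp
qed

lemma char_poly_const_row_sum:
  fixes A :: "nat \<Rightarrow> nat \<Rightarrow> complex"
  assumes k: "k \<ge> 1" and rows: "\<And>a. a < k \<Longrightarrow> (\<Sum>b<k. A a b) = r"
  shows "char_poly (mat k k (\<lambda>(a, b). A a b)) = [:- r, 1:] * char_poly (deflated_mat k A)"
proof -
  have "mat k k (\<lambda>(a, b). A a b) = block_partition_mat 1 k (\<lambda>_. A) (\<lambda>_ _. 0)"
    by (rule eq_matI) (auto simp: block_partition_mat_def)
  also have "char_poly \<dots> = char_poly (mat 1 1 (\<lambda>(i, j). if i = j then r else of_nat k * 0))
      * char_poly (deflated_mat k A)"
    using k rows char_poly_block_partition_mat[of k 1 "\<lambda>_. A" r "\<lambda>_ _. 0"]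
    by (simp add: lessThan_Suc)
  finally show ?thesis
    unfolding char_poly_mat_1 by simp
qed

lemma sum_list_abs_affine_ge:
  fixes ls :: "real list" and r k :: real
  assumes "k \<ge> 0" "r \<ge> 0"
  shows "(\<Sum>l\<leftarrow>ls. \<bar>k * l + r\<bar>)
    \<ge> k * (\<Sum>l\<leftarrow>ls. \<bar>l\<bar>) + r * length ls - 2 * r * length (filter (\<lambda>l. l < 0) ls)"
proof (induction ls)
  case (Cons l ls)
  have "\<bar>k * l + r\<bar> \<ge> k * \<bar>l\<bar> + r - 2 * r * of_bool (l < 0)"
    using assms by (cases "l < 0") (auto simp: abs_if)
  with Cons.IH show ?case
    by (cases "l < 0") (simp_all add: ring_distribs)
qed simp

lemma length_filter_neg_less:
  fixes ls :: "real list"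
  assumes "sum_list ls = 0" "ls \<noteq> []"
  shows "length (filter (\<lambda>l. l < 0) ls) < length ls"
proof (rule ccontr)
  assume "\<not> ?thesis"
  then have "\<forall>l\<in>set ls. l < 0"
    using length_filter_less[of _ ls "\<lambda>l. l < 0"] by blast
  then have "sum_list ls < 0"
    using sum_list_strict_mono[of ls "\<lambda>l. l" "\<lambda>_. 0"] assms(2) by simp
  with assms(1) show False
    by simp
qed

lemma sum_list_abs_affine_ge_hyperenergetic:
  fixes ls :: "real list" and r k :: real
  assumes "sum_list ls = 0" and hyper: "(\<Sum>l\<leftarrow>ls. \<bar>l\<bar>) \<ge> 2 * (real (length ls) - 1)"
    and "0 \<le> r" "r \<le> k - 1"
  shows "(\<Sum>l\<leftarrow>ls. \<bar>k * l + r\<bar>) \<ge> (\<Sum>l\<leftarrow>ls. \<bar>l\<bar>) + length ls * r"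
proof (cases "ls = []")
  case False
  define N where "N = length (filter (\<lambda>l. l < 0) ls)"
  have "real N \<le> real (length ls) - 1"
    using length_filter_neg_less[OF assms(1) False] unfolding N_def by linarith
  then have "r * (2 * N) \<le> (k - 1) * (2 * (real (length ls) - 1))"
    using assms(3,4) by (intro mult_mono) auto
  also have "\<dots> \<le> (k - 1) * (\<Sum>l\<leftarrow>ls. \<bar>l\<bar>)"
    using hyper assms(3,4) by (intro mult_left_mono) auto
  finally show ?thesis
    using sum_list_abs_affine_ge[of k r ls] assms(3,4) unfolding N_def by (simp add: algebra_simps)
qed simp

lemma adj_mat_carrier [simp]: "adj_mat n E \<in> carrier_mat n n"
  by (simp add: adj_mat_def)

lemma regular_graph_degree_less:
  assumes "regular_graph n r E" "0 < n"
  shows "r < n"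
proof -
  have "{j. j < n \<and> E 0 j} \<subseteq> {..<n} - {0}"
    using assms unfolding regular_graph_def simple_graph_def by auto
  then have "card {j. j < n \<and> E 0 j} \<le> card ({..<n} - {0})"
    by (intro card_mono) auto
  also have "\<dots> < n"
    using assms(2) by simp
  finally show ?thesis
    using assms unfolding regular_graph_def by auto
qed

lemma regular_graph_adj_mat_row_sum:
  assumes "regular_graph n r E" "a < n"
  shows "(\<Sum>b<n. adj_mat n E $$ (a, b)) = real r"
proof -
  have "(\<Sum>b<n. adj_mat n E $$ (a, b)) = real (card {b. b < n \<and> E a b})"
    using assms(2) by (simp add: adj_mat_def of_bool_def[symmetric] Int_def)
  with assms show ?thesis
    unfolding regular_graph_def by simp
qed

lemma adj_mat_spectrum:
  assumes "simple_graph n E"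
  obtains ls where "char_poly (map_mat complex_of_real (adj_mat n E)) = (\<Prod>l\<leftarrow>ls. [:- complex_of_real l, 1:])"
    "length ls = n" "sum_list ls = 0"
proof -
  let ?A = "map_mat complex_of_real (adj_mat n E)"
  have A: "?A \<in> carrier_mat n n"
    by simp
  obtain es where es: "char_poly ?A = (\<Prod>a\<leftarrow>es. [:- a, 1:])" "length es = n"
    using char_poly_factorized[OF A] by blast
  have "Im e = 0" if "e \<in> set es" for e
  proof (rule real_symmetric_mat_eigenvalue_real[of "adj_mat n E" n])
    show "adj_mat n E $$ (i, j) = adj_mat n E $$ (j, i)" if "i < n" "j < n" for i j
      using assms that unfolding simple_graph_def by (simp add: adj_mat_def)
    show "poly (char_poly ?A) e = 0"
      using \<open>e \<in> set es\<close> es(1) by (simp add: poly_prod_list_zero_iff)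
  qed simp
  define ls where "ls = map Re es"
  have es_ls: "es = map complex_of_real ls"
    unfolding ls_def map_map
    by (intro map_idI[symmetric]) (simp add: complex_eq_iff \<open>\<And>e. e \<in> set es \<Longrightarrow> Im e = 0\<close>)
  have "complex_of_real (sum_list ls) = sum_list es"
    unfolding es_ls by (induction ls) auto
  also have "\<dots> = (\<Sum>i<n. ?A $$ (i, i))"
    using A es(1) by (rule sum_eigenvalues_eq_trace)
  also have "\<dots> = 0"
    using assms unfolding simple_graph_def by (simp add: adj_mat_def)
  finally have "sum_list ls = 0"
    by simp
  moreover have "char_poly ?A = (\<Prod>l\<leftarrow>ls. [:- complex_of_real l, 1:])"
    using es(1) unfolding es_ls by (simp add: comp_def)
  moreover have "length ls = n"
    using es(2) by (simp add: ls_def)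
  ultimately show ?thesis
    using that by blast
qed

lemma of_real_joined_union_mat:
  "map_mat complex_of_real (joined_union_mat d E k Gs) = block_partition_mat d k
     (\<lambda>i a b. complex_of_real (adj_mat k (Gs i) $$ (a, b))) (\<lambda>i j. complex_of_real (adj_mat d E $$ (i, j)))"
  by (rule eq_matI) (auto simp: joined_union_mat_def block_partition_mat_def)

lemma char_poly_regular_graph_adj_mat:
  assumes "regular_graph k r G" "k \<ge> 1"
  shows "char_poly (map_mat complex_of_real (adj_mat k G))
    = [:- of_nat r, 1:] * char_poly (deflated_mat k (\<lambda>a b. complex_of_real (adj_mat k G $$ (a, b))))"
proof -
  have "map_mat complex_of_real (adj_mat k G) = mat k k (\<lambda>(a, b). complex_of_real (adj_mat k G $$ (a, b)))"
    by (rule eq_matI) (auto simp: adj_mat_def)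
  moreover have "(\<Sum>b<k. complex_of_real (adj_mat k G $$ (a, b))) = of_nat r" if "a < k" for a
    using regular_graph_adj_mat_row_sum[OF assms(1) that] by (simp flip: of_real_sum)
  ultimately show ?thesis
    using assms(2) by (simp add: char_poly_const_row_sum)
qed

lemma char_poly_joined_union_mat:
  assumes "simple_graph d E" "k \<ge> 1" "\<And>i. i < d \<Longrightarrow> regular_graph k r (Gs i)"
    and cp: "char_poly (map_mat complex_of_real (adj_mat d E)) = (\<Prod>l\<leftarrow>ls. [:- complex_of_real l, 1:])"
  shows "char_poly (map_mat complex_of_real (joined_union_mat d E k Gs))
    = (\<Prod>l\<leftarrow>ls. [:- complex_of_real (k * l + r), 1:])
      * (\<Prod>i<d. char_poly (deflated_mat k (\<lambda>a b. complex_of_real (adj_mat k (Gs i) $$ (a, b)))))"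
proof -
  let ?A = "map_mat complex_of_real (adj_mat d E)"
  have rows: "(\<Sum>b<k. complex_of_real (adj_mat k (Gs i) $$ (a, b))) = of_nat r" if "i < d" "a < k" for i a
    using regular_graph_adj_mat_row_sum[OF assms(3)[OF that(1)] that(2)] by (simp flip: of_real_sum)
  \<comment> \<open>The quotient matrix of the partition into the blocks \<open>G\<^sub>i\<close> is \<open>r I + k A\<^sub>G\<close>.\<close>
  have "mat d d (\<lambda>(i, j). if i = j then of_nat r else of_nat k * complex_of_real (adj_mat d E $$ (i, j)))
      = of_nat k \<cdot>\<^sub>m ?A + of_nat r \<cdot>\<^sub>m 1\<^sub>m d"
    using assms(1) by (intro eq_matI) (auto simp: simple_graph_def adj_mat_def)
  moreover have "char_poly (of_nat k \<cdot>\<^sub>m ?A + of_nat r \<cdot>\<^sub>m 1\<^sub>m d)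
      = (\<Prod>a\<leftarrow>map complex_of_real ls. [:- (of_nat k * a + of_nat r), 1:])"
    using cp by (intro char_poly_smult_add_scalar) (simp_all add: comp_def)
  ultimately show ?thesis
    unfolding of_real_joined_union_mat using char_poly_block_partition_mat[OF assms(2) rows]
    by (simp add: comp_def)
qed

lemma mat_energy_joined_union_mat:
  assumes "simple_graph d E" "k \<ge> 1" "\<And>i. i < d \<Longrightarrow> regular_graph k r (Gs i)"
    and cp: "char_poly (map_mat complex_of_real (adj_mat d E)) = (\<Prod>l\<leftarrow>ls. [:- complex_of_real l, 1:])"
  shows "mat_energy (joined_union_mat d E k Gs) + d * r
    = (\<Sum>l\<leftarrow>ls. \<bar>k * l + r\<bar>) + (\<Sum>i<d. graph_energy k (Gs i))"
proof -
  define C where "C i = char_poly (deflated_mat k (\<lambda>a b. complex_of_real (adj_mat k (Gs i) $$ (a, b))))"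
    for i
  have C: "C i \<noteq> 0" for i
    unfolding C_def by (rule char_poly_nonzero[of _ "k - 1"]) (simp add: deflated_mat_def)
  have "char_poly (map_mat complex_of_real (joined_union_mat d E k Gs))
      = (\<Prod>l\<leftarrow>ls. [:- complex_of_real (k * l + r), 1:]) * (\<Prod>i<d. C i)"
    unfolding C_def by (rule char_poly_joined_union_mat[where Gs = Gs, OF assms])
  moreover have "(\<Prod>l\<leftarrow>ls. [:- complex_of_real (k * l + r), 1:]) \<noteq> 0" "(\<Prod>i<d. C i) \<noteq> 0"
    using C by (auto simp: prod_list_zero_iff)
  ultimately have "mat_energy (joined_union_mat d E k Gs)
      = (\<Sum>l\<leftarrow>ls. \<bar>k * l + r\<bar>) + (\<Sum>i<d. proots_cmod_sum (C i))"
    using C by (simp add: mat_energy_eq_proots_cmod_sum proots_cmod_sum_mult proots_cmod_sum_prod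
        proots_cmod_sum_prod_linear_factors del: of_real_add of_real_mult)
  moreover have "graph_energy k (Gs i) = r + proots_cmod_sum (C i)" if "i < d" for i
    unfolding graph_energy_def mat_energy_eq_proots_cmod_sum
      char_poly_regular_graph_adj_mat[OF assms(3)[OF that] assms(2)] C_def[symmetric]
    using C by (simp add: proots_cmod_sum_mult del: mult_pCons_left) (simp add: proots_cmod_sum_def)
  ultimately show ?thesis
    by (simp add: sum.distrib)
qed

theorem mainTheorem10:
  fixes d k r :: nat and E :: "nat \<Rightarrow> nat \<Rightarrow> bool"
    and Gs :: "nat \<Rightarrow> nat \<Rightarrow> nat \<Rightarrow> bool"
  assumes "simple_graph d E"
    and "graph_energy d E \<ge> 2 * (real d - 1)"
    and "k \<ge> 1"
    and "\<And>i. i < d \<Longrightarrow> regular_graph k r (Gs i)"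
  shows "mat_energy (joined_union_mat d E k Gs)
           \<ge> graph_energy d E + (\<Sum>i<d. graph_energy k (Gs i))"
proof -
  obtain ls where cp: "char_poly (map_mat complex_of_real (adj_mat d E)) = (\<Prod>l\<leftarrow>ls. [:- complex_of_real l, 1:])"
    and "length ls = d" "sum_list ls = 0"
    using adj_mat_spectrum[OF assms(1)] .
  have energy: "graph_energy d E = (\<Sum>l\<leftarrow>ls. \<bar>l\<bar>)"
    unfolding graph_energy_def mat_energy_eq_proots_cmod_sum cp proots_cmod_sum_prod_linear_factors
    by simp
  have "(\<Sum>l\<leftarrow>ls. \<bar>l\<bar>) + d * r \<le> (\<Sum>l\<leftarrow>ls. \<bar>k * l + r\<bar>)"
  proof (cases "d = 0")
    case False
    then have "r < k"
      using regular_graph_degree_less[OF assms(4)] assms(3) by auto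
    then have "real r \<le> real k - 1"
      by linarith
    then show ?thesis
      using sum_list_abs_affine_ge_hyperenergetic[where ls = ls and k = "real k" and r = "real r"]
        \<open>sum_list ls = 0\<close> assms(2) energy \<open>length ls = d\<close> by simp
  qed (use \<open>length ls = d\<close> in simp)
  with mat_energy_joined_union_mat[where Gs = Gs, OF assms(1,3,4) cp] energy show ?thesis
    by simp
qed

end
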